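(* Let $\alpha\in\mathbb C$, $k\in\mathbb N$, $P_k:=\mathbb C[\rho,\varepsilon]/(\varepsilon^k)$, and define $T_{(\alpha,k)}:R\to P_k$ by $T_{(\alpha,k)}(f)=\sum_{i=0}^{k-1}f^{(i)}_\alpha\,\frac{\varepsilon^i}{i!}$. Then: (1) $T_{(\alpha,k)}$ is a $\mathbb C$-algebra homomorphism and $\ker T_{(\alpha,k)}=(l_\alpha^k)$; (2) the induced injective algebra homomorphism $\tau:R/(l_\alpha^k)\to P_k$ induces an isomorphism between the total rings of fractions of $R/(l_\alpha^k)$ and of $P_k$.
   Context: $R=\mathbb C[z_1,z_2]$, identified via polar coordinates $z_1=\rho\cos\varphi$, $z_2=\rho\sin\varphi$ with the subalgebra $\mathbb C[\rho\cos\varphi,\rho\sin\varphi]$ of analytic functions in $(\rho,\varphi)\in\mathbb C^2$. For $f\in R$, $\alpha\in\mathbb C$, $i\in\mathbb N_0$, let $f^{(i)}_\alpha:=\frac{\partial^i f}{\partial\varphi^i}\big|_{\varphi=\alpha}\in\mathbb C[\rho]$. Put $l_\alpha=-\sin(\alpha)z_1+\cos(\alpha)z_2=\rho\sin(\varphi-\alpha)$. *)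

theory Defs
  imports Complex_Main "HOL-Analysis.Derivative" "HOL-Algebra.QuotRing" "HOL-Computational_Algebra.Polynomial"
begin

definition type_ring :: "('a::comm_ring_1) ring" where
  "type_ring = \<lparr>carrier = UNIV, monoid.mult = (*), one = 1, zero = 0, add = (+)\<rparr>"

section \<open>R = C[z1,z2] as complex poly poly (inner variable z1, outer variable z2)\<close>

definition eval2 :: "complex poly poly \<Rightarrow> complex \<Rightarrow> complex \<Rightarrow> complex" where
  "eval2 f x1 x2 = poly (map_poly (\<lambda>c. poly c x1) f) x2"

definition phi_deriv :: "complex poly poly \<Rightarrow> nat \<Rightarrow> complex \<Rightarrow> complex poly" where
  "phi_deriv f i \<alpha> =
     (THE p. \<forall>\<rho>. poly p \<rho> = ((deriv ^^ i) (\<lambda>\<phi>. eval2 f (\<rho> * cos \<phi>) (\<rho> * sin \<phi>))) \<alpha>)"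

text \<open>l_alpha = - sin(alpha) z1 + cos(alpha) z2\<close>
definition l_lin :: "complex \<Rightarrow> complex poly poly" where
  "l_lin \<alpha> = [: [:0, - sin \<alpha>:], [:cos \<alpha>:] :]"

section \<open>P_k = C[rho,eps]/(eps^k), C[rho,eps] as complex poly poly (inner rho, outer eps)\<close>

definition eps :: "complex poly poly" where
  "eps = [:0, 1:]"

definition Pk :: "nat \<Rightarrow> complex poly poly set ring" where
  "Pk k = type_ring Quot (PIdl\<^bsub>type_ring\<^esub> (eps ^ k))"

definition Tmap :: "complex \<Rightarrow> nat \<Rightarrow> complex poly poly \<Rightarrow> complex poly poly set" where
  "Tmap \<alpha> k f = (PIdl\<^bsub>type_ring\<^esub> (eps ^ k)) +>\<^bsub>type_ring\<^esub>
      (\<Sum>i<k. monom (smult (1 / fact i) (phi_deriv f i \<alpha>)) i)"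

definition Rquot :: "complex \<Rightarrow> nat \<Rightarrow> complex poly poly set ring" where
  "Rquot \<alpha> k = type_ring Quot (PIdl\<^bsub>type_ring\<^esub> (l_lin \<alpha> ^ k))"

text \<open>map induced on a quotient by a map constant on cosets\<close>
definition quot_induced :: "('a \<Rightarrow> 'b) \<Rightarrow> 'a set \<Rightarrow> 'b" where
  "quot_induced h X = h (SOME x. x \<in> X)"

definition nzd :: "('a, 'm) ring_scheme \<Rightarrow> 'a set" where
  "nzd R = {s \<in> carrier R. \<forall>a \<in> carrier R. s \<otimes>\<^bsub>R\<^esub> a = \<zero>\<^bsub>R\<^esub> \<longrightarrow> a = \<zero>\<^bsub>R\<^esub>}"

definition frac_rel :: "('a, 'm) ring_scheme \<Rightarrow> (('a \<times> 'a) \<times> ('a \<times> 'a)) set" where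
  "frac_rel R = {((a, s), (b, t)). a \<in> carrier R \<and> s \<in> nzd R \<and> b \<in> carrier R \<and> t \<in> nzd R
                   \<and> a \<otimes>\<^bsub>R\<^esub> t = b \<otimes>\<^bsub>R\<^esub> s}"

definition total_frac :: "('a, 'm) ring_scheme \<Rightarrow> ('a \<times> 'a) set ring" where
  "total_frac R =
    \<lparr>carrier = (carrier R \<times> nzd R) // frac_rel R,
     monoid.mult = (\<lambda>X Y. \<Union>{frac_rel R `` {(a \<otimes>\<^bsub>R\<^esub> b, s \<otimes>\<^bsub>R\<^esub> t)} | a s b t. (a, s) \<in> X \<and> (b, t) \<in> Y}),
     one = frac_rel R `` {(\<one>\<^bsub>R\<^esub>, \<one>\<^bsub>R\<^esub>)},
     zero = frac_rel R `` {(\<zero>\<^bsub>R\<^esub>, \<one>\<^bsub>R\<^esub>)},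
     add = (\<lambda>X Y. \<Union>{frac_rel R `` {(a \<otimes>\<^bsub>R\<^esub> t \<oplus>\<^bsub>R\<^esub> b \<otimes>\<^bsub>R\<^esub> s, s \<otimes>\<^bsub>R\<^esub> t)}
                       | a s b t. (a, s) \<in> X \<and> (b, t) \<in> Y})\<rparr>"

definition frac_map :: "('b, 'n) ring_scheme \<Rightarrow> ('a \<Rightarrow> 'b) \<Rightarrow> ('a \<times> 'a) set \<Rightarrow> ('b \<times> 'b) set" where
  "frac_map S h X = \<Union>{frac_rel S `` {(h a, h s)} | a s. (a, s) \<in> X}"

end

theory Submission
  imports Defs "HOL-Complex_Analysis.Cauchy_Integral_Formula"
begin

text \<open>\<open>T\<^sub>(\<^sub>\<alpha>\<^sub>,\<^sub>k\<^sub>)\<close> is the truncated Taylor expansion in \<open>\<phi>\<close> about \<open>\<alpha>\<close> of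
  \<open>f(\<rho> cos \<phi>, \<rho> sin \<phi>)\<close>, so the Leibniz rule makes it multiplicative.  Since
  \<open>l\<^sub>\<alpha> = \<rho> sin (\<phi> - \<alpha>)\<close>, its kernel is \<open>(l\<^sub>\<alpha>\<^sup>k)\<close>: a polynomial vanishing on the line
  \<open>\<phi> = \<alpha>\<close> is divisible by \<open>l\<^sub>\<alpha>\<close>, and the Leibniz rule peels off one factor \<open>l\<^sub>\<alpha>\<close> per
  vanishing derivative.  The non-zero-divisors are the elements not vanishing on the line, resp.
  at \<open>\<epsilon> = 0\<close>.  With \<open>m\<^sub>\<alpha> = \<rho> cos (\<phi> - \<alpha>)\<close> one has \<open>T(l\<^sub>\<alpha>)/T(m\<^sub>\<alpha>) = tan \<epsilon>\<close>; as
  \<open>tan \<epsilon> = \<epsilon> + O(\<epsilon>\<^sup>2)\<close>, its powers reach all of \<open>\<complex>[\<epsilon>]/(\<epsilon>\<^sup>k)\<close>, and then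
  \<open>\<rho> = T(m\<^sub>\<alpha>)/cos \<epsilon>\<close> is a fraction too.  So every element of \<open>P\<^sub>k\<close> is a fraction of
  images of the injective map \<open>\<tau>\<close>, which gives the isomorphism of total rings of fractions.\<close>

section \<open>Quotients of a commutative ring type by a principal ideal\<close>

lemma type_ring_simps [simp]:
  "carrier type_ring = UNIV" "mult type_ring = (*)" "one type_ring = 1"
  "zero type_ring = 0" "add type_ring = (+)"
  by (simp_all add: type_ring_def)

lemma cring_type_ring: "cring (type_ring :: ('a::comm_ring_1) ring)"
proof (rule cringI)
  show "abelian_group (type_ring :: 'a ring)"
    by (rule abelian_groupI) (auto simp: algebra_simps intro: exI[of _ "-x" for x])
  show "comm_monoid (type_ring :: 'a ring)"
    by (rule comm_monoidI) (auto simp: algebra_simps)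
qed (simp add: algebra_simps)

definition mod_class :: "'a::comm_ring_1 \<Rightarrow> 'a \<Rightarrow> 'a set" where
  "mod_class d x = {y. d dvd y - x}"

lemma mod_class_eq_iff: "mod_class d x = mod_class d y \<longleftrightarrow> d dvd x - y"
proof
  assume "mod_class d x = mod_class d y"
  moreover have "x \<in> mod_class d x" by (simp add: mod_class_def)
  ultimately show "d dvd x - y" by (simp add: mod_class_def)
next
  assume "d dvd x - y"
  then have "d dvd z - x \<longleftrightarrow> d dvd z - y" for z
    by (metis diff_add_cancel diff_diff_eq2 dvd_add_left_iff)
  then show "mod_class d x = mod_class d y" by (simp add: mod_class_def)
qed

lemma mod_class_eq_0_iff: "mod_class d x = mod_class d 0 \<longleftrightarrow> d dvd x"
  by (simp add: mod_class_eq_iff)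

lemma mod_class_add_cong:
  "mod_class d x = mod_class d x' \<Longrightarrow> mod_class d y = mod_class d y'
   \<Longrightarrow> mod_class d (x + y) = mod_class d (x' + y')"
  unfolding mod_class_eq_iff by (metis add_diff_add dvd_add)

lemma mod_class_mult_cong:
  assumes "mod_class d x = mod_class d x'" "mod_class d y = mod_class d y'"
  shows "mod_class d (x * y) = mod_class d (x' * y')"
proof -
  have "x * y - x' * y' = (x - x') * y + x' * (y - y')" by (simp add: algebra_simps)
  then show ?thesis using assms unfolding mod_class_eq_iff by (simp add: dvd_add dvd_mult2 dvd_mult)
qed

lemma cgenideal_type_ring: "PIdl\<^bsub>type_ring\<^esub> (d::'a::comm_ring_1) = {y. d dvd y}"
  unfolding cgenideal_def by (auto simp: dvd_def mult.commute)

lemma r_coset_type_ring: "PIdl\<^bsub>type_ring\<^esub> (d::'a::comm_ring_1) +>\<^bsub>type_ring\<^esub> x = mod_class d x"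
  unfolding cgenideal_type_ring a_r_coset_def' mod_class_def by auto

lemma ideal_cgenideal_type_ring: "ideal (PIdl\<^bsub>type_ring\<^esub> (d::'a::comm_ring_1)) type_ring"
  by (rule cring.cgenideal_ideal[OF cring_type_ring]) simp

lemma cring_quot_type_ring: "cring (type_ring Quot PIdl\<^bsub>type_ring\<^esub> (d::'a::comm_ring_1))"
  by (rule ideal.quotient_is_cring[OF ideal_cgenideal_type_ring cring_type_ring])

context
  fixes d :: "'a::comm_ring_1"
begin

abbreviation (input) "Q \<equiv> type_ring Quot PIdl\<^bsub>type_ring\<^esub> d"

lemma carrier_quot_type_ring: "carrier Q = range (mod_class d)"
  unfolding FactRing_def A_RCOSETS_def' by (auto simp: r_coset_type_ring)

lemma zero_quot_type_ring: "zero Q = mod_class d 0"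
  unfolding FactRing_def by (simp add: cgenideal_type_ring mod_class_def)

lemma one_quot_type_ring: "one Q = mod_class d 1"
  unfolding FactRing_def by (simp add: r_coset_type_ring)

lemma mult_quot_type_ring: "mult Q (mod_class d x) (mod_class d y) = mod_class d (x * y)"
  using ideal.rcoset_mult_add[OF ideal_cgenideal_type_ring, of x y]
  unfolding FactRing_def by (simp add: r_coset_type_ring)

lemma add_quot_type_ring: "add Q (mod_class d x) (mod_class d y) = mod_class d (x + y)"
  using ideal.a_rcos_sum[OF ideal_cgenideal_type_ring, of x y]
  unfolding FactRing_def by (simp add: r_coset_type_ring)

lemma quot_induced_mod_class:
  assumes "\<And>x y. d dvd x - y \<Longrightarrow> h x = h y"
  shows "quot_induced h (mod_class d x) = h x"
proof -
  have "(SOME y. y \<in> mod_class d x) \<in> mod_class d x"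
    by (rule someI[of _ x]) (simp add: mod_class_def)
  then show ?thesis using assms by (simp add: quot_induced_def mod_class_def)
qed

lemma quot_induced_ring_hom:
  assumes hom: "h \<in> ring_hom type_ring S" and cong: "\<And>x y. d dvd x - y \<Longrightarrow> h x = h y"
  shows "quot_induced h \<in> ring_hom Q S"
proof -
  note induced = quot_induced_mod_class[of h, OF cong]
  show ?thesis
  proof (rule ring_hom_memI)
    fix x assume "x \<in> carrier Q"
    then show "quot_induced h x \<in> carrier S"
      using hom by (auto simp: carrier_quot_type_ring induced ring_hom_closed)
  next
    fix x y assume "x \<in> carrier Q" "y \<in> carrier Q"
    then obtain f g where "x = mod_class d f" "y = mod_class d g"
      by (auto simp: carrier_quot_type_ring)
    then show "quot_induced h (x \<otimes>\<^bsub>Q\<^esub> y) = quot_induced h x \<otimes>\<^bsub>S\<^esub> quot_induced h y"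
      and "quot_induced h (x \<oplus>\<^bsub>Q\<^esub> y) = quot_induced h x \<oplus>\<^bsub>S\<^esub> quot_induced h y"
      using ring_hom_mult[OF hom, of f g] ring_hom_add[OF hom, of f g]
      by (simp_all add: mult_quot_type_ring add_quot_type_ring induced)
  next
    show "quot_induced h \<one>\<^bsub>Q\<^esub> = \<one>\<^bsub>S\<^esub>"
      using ring_hom_one[OF hom] by (simp add: one_quot_type_ring induced)
  qed
qed

lemma inj_on_quot_induced:
  assumes "\<And>x y. h x = h y \<longleftrightarrow> d dvd x - y"
  shows "inj_on (quot_induced h) (carrier Q)"
proof (rule inj_onI)
  fix X Y assume "X \<in> carrier Q" "Y \<in> carrier Q" and eq: "quot_induced h X = quot_induced h Y"
  then obtain f g where "X = mod_class d f" "Y = mod_class d g"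
    by (auto simp: carrier_quot_type_ring)
  then show "X = Y" using eq assms by (simp add: quot_induced_mod_class mod_class_eq_iff)
qed

lemma nzd_quot_type_ring_iff:
  "mod_class d x \<in> nzd Q \<longleftrightarrow> (\<forall>y. d dvd x * y \<longrightarrow> d dvd y)"
  by (auto simp: nzd_def carrier_quot_type_ring zero_quot_type_ring mult_quot_type_ring
      mod_class_eq_0_iff)

end

section \<open>Total rings of fractions\<close>

lemma Union_eq_const: "(\<And>X. X \<in> M \<Longrightarrow> X = C) \<Longrightarrow> C \<in> M \<Longrightarrow> \<Union>M = C"
  by blast

context cring
begin

lemma nzd_closed: "s \<in> nzd R \<Longrightarrow> s \<in> carrier R"
  by (simp add: nzd_def)

lemma nzd_zero_product: "s \<in> nzd R \<Longrightarrow> x \<in> carrier R \<Longrightarrow> s \<otimes> x = \<zero> \<Longrightarrow> x = \<zero>"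
  unfolding nzd_def by blast

lemma one_nzd: "\<one> \<in> nzd R"
  unfolding nzd_def by auto

lemma nzd_mult_cancel:
  assumes s: "s \<in> nzd R" and xy: "x \<in> carrier R" "y \<in> carrier R" and eq: "s \<otimes> x = s \<otimes> y"
  shows "x = y"
proof -
  have "s \<otimes> (x \<ominus> y) = s \<otimes> x \<ominus> s \<otimes> y" using nzd_closed[OF s] xy by algebra
  then have "s \<otimes> (x \<ominus> y) = \<zero>" using eq nzd_closed[OF s] xy by (simp add: a_minus_def r_neg)
  then have "x \<ominus> y = \<zero>" using nzd_zero_product[OF s] xy by simp
  then show ?thesis using xy by (metis a_minus_def add.inv_closed minus_equality r_neg)
qed

lemma nzd_mult: assumes "s \<in> nzd R" "t \<in> nzd R" shows "s \<otimes> t \<in> nzd R"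
proof -
  have "a = \<zero>" if a: "a \<in> carrier R" "s \<otimes> t \<otimes> a = \<zero>" for a
  proof -
    have "s \<otimes> (t \<otimes> a) = \<zero>" using a assms nzd_closed by (simp add: m_assoc)
    then have "t \<otimes> a = \<zero>" using assms(1) a(1) assms(2) nzd_closed nzd_zero_product by blast
    then show "a = \<zero>" using assms(2) a(1) nzd_zero_product by blast
  qed
  then show ?thesis using assms nzd_closed unfolding nzd_def by blast
qed

lemma equiv_frac_rel: "equiv (carrier R \<times> nzd R) (frac_rel R)"
proof (rule equivI)
  show "refl_on (carrier R \<times> nzd R) (frac_rel R)"
    by (rule refl_onI) (auto simp: frac_rel_def)
  show "sym (frac_rel R)"
    by (rule symI) (auto simp: frac_rel_def)
  show "trans (frac_rel R)"
  proof (rule transI)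
    fix x y z assume xy: "(x, y) \<in> frac_rel R" and yz: "(y, z) \<in> frac_rel R"
    obtain a s b t c u where xyz: "x = (a, s)" "y = (b, t)" "z = (c, u)"
      by (cases x, cases y, cases z) blast
    have c: "a \<in> carrier R" "b \<in> carrier R" "c \<in> carrier R" "s \<in> carrier R" "t \<in> carrier R"
      "u \<in> carrier R" and t: "t \<in> nzd R" and e1: "a \<otimes> t = b \<otimes> s" and e2: "b \<otimes> u = c \<otimes> t"
      using xy yz nzd_closed by (auto simp: xyz frac_rel_def)
    have "t \<otimes> (a \<otimes> u) = (a \<otimes> t) \<otimes> u" using c by algebra
    also have "\<dots> = s \<otimes> (b \<otimes> u)" using c e1 by (simp add: m_ac)
    also have "\<dots> = t \<otimes> (c \<otimes> s)" using c e2 by (simp add: m_ac)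
    finally have "a \<otimes> u = c \<otimes> s" using nzd_mult_cancel[OF t] c by simp
    then show "(x, z) \<in> frac_rel R" using xy yz by (auto simp: xyz frac_rel_def)
  qed
  show "frac_rel R \<subseteq> (carrier R \<times> nzd R) \<times> (carrier R \<times> nzd R)"
    by (auto simp: frac_rel_def)
qed

lemma frac_rel_class_eq:
  "((a, s), (b, t)) \<in> frac_rel R \<Longrightarrow> frac_rel R `` {(a, s)} = frac_rel R `` {(b, t)}"
  by (rule equiv_class_eq[OF equiv_frac_rel])

lemma frac_rel_class_eq_iff:
  assumes "a \<in> carrier R" "s \<in> nzd R" "b \<in> carrier R" "t \<in> nzd R"
  shows "frac_rel R `` {(a, s)} = frac_rel R `` {(b, t)} \<longleftrightarrow> a \<otimes> t = b \<otimes> s"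
  using eq_equiv_class_iff[OF equiv_frac_rel, of "(a, s)" "(b, t)"] assms
  by (auto simp: frac_rel_def)

lemma frac_rel_class_self: "a \<in> carrier R \<Longrightarrow> s \<in> nzd R \<Longrightarrow> (a, s) \<in> frac_rel R `` {(a, s)}"
  by (auto simp: frac_rel_def)

lemma carrier_total_frac_iff:
  "X \<in> carrier (total_frac R) \<longleftrightarrow>
   (\<exists>a s. a \<in> carrier R \<and> s \<in> nzd R \<and> X = frac_rel R `` {(a, s)})"
  unfolding total_frac_def by (auto simp: quotient_def)

lemma one_total_frac: "\<one>\<^bsub>total_frac R\<^esub> = frac_rel R `` {(\<one>, \<one>)}"
  by (simp add: total_frac_def)

text \<open>The operations of \<open>total_frac\<close> take a union over all representatives, which collapses
  to a single class.\<close>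

lemma mult_total_frac:
  assumes "a \<in> carrier R" "s \<in> nzd R" "b \<in> carrier R" "t \<in> nzd R"
  shows "frac_rel R `` {(a, s)} \<otimes>\<^bsub>total_frac R\<^esub> frac_rel R `` {(b, t)}
     = frac_rel R `` {(a \<otimes> b, s \<otimes> t)}"
proof -
  have class_eq: "frac_rel R `` {(a' \<otimes> b', s' \<otimes> t')} = frac_rel R `` {(a \<otimes> b, s \<otimes> t)}"
    if r: "((a, s), (a', s')) \<in> frac_rel R" "((b, t), (b', t')) \<in> frac_rel R" for a' s' b' t'
  proof (rule frac_rel_class_eq)
    have c: "a' \<in> carrier R" "s' \<in> nzd R" "b' \<in> carrier R" "t' \<in> nzd R"
      "a \<otimes> s' = a' \<otimes> s" "b \<otimes> t' = b' \<otimes> t" using r by (auto simp: frac_rel_def)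
    have cc: "s \<in> carrier R" "t \<in> carrier R" "s' \<in> carrier R" "t' \<in> carrier R"
      using c assms nzd_closed by blast+
    have "(a' \<otimes> b') \<otimes> (s \<otimes> t) = (a' \<otimes> s) \<otimes> (b' \<otimes> t)" using c(1,3) cc assms(1,3) by algebra
    also have "\<dots> = (a \<otimes> s') \<otimes> (b \<otimes> t')" by (simp only: c(5,6))
    also have "\<dots> = (a \<otimes> b) \<otimes> (s' \<otimes> t')" using c(1,3) cc assms(1,3) by algebra
    finally show "((a' \<otimes> b', s' \<otimes> t'), (a \<otimes> b, s \<otimes> t)) \<in> frac_rel R"
      using c assms by (auto simp: frac_rel_def nzd_mult)
  qed
  show ?thesis
    unfolding total_frac_def monoid.simps
    by (rule Union_eq_const) (use class_eq assms frac_rel_class_self in blast)+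
qed

lemma add_total_frac:
  assumes "a \<in> carrier R" "s \<in> nzd R" "b \<in> carrier R" "t \<in> nzd R"
  shows "frac_rel R `` {(a, s)} \<oplus>\<^bsub>total_frac R\<^esub> frac_rel R `` {(b, t)}
     = frac_rel R `` {(a \<otimes> t \<oplus> b \<otimes> s, s \<otimes> t)}"
proof -
  have class_eq: "frac_rel R `` {(a' \<otimes> t' \<oplus> b' \<otimes> s', s' \<otimes> t')} = frac_rel R `` {(a \<otimes> t \<oplus> b \<otimes> s, s \<otimes> t)}"
    if r: "((a, s), (a', s')) \<in> frac_rel R" "((b, t), (b', t')) \<in> frac_rel R" for a' s' b' t'
  proof (rule frac_rel_class_eq)
    have c: "a' \<in> carrier R" "s' \<in> nzd R" "b' \<in> carrier R" "t' \<in> nzd R"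
      "a \<otimes> s' = a' \<otimes> s" "b \<otimes> t' = b' \<otimes> t" using r by (auto simp: frac_rel_def)
    have cc: "s \<in> carrier R" "t \<in> carrier R" "s' \<in> carrier R" "t' \<in> carrier R"
      using c assms nzd_closed by blast+
    have "(a' \<otimes> t' \<oplus> b' \<otimes> s') \<otimes> (s \<otimes> t) = (a' \<otimes> s) \<otimes> (t' \<otimes> t) \<oplus> (b' \<otimes> t) \<otimes> (s' \<otimes> s)"
      using c(1,3) cc assms(1,3) by algebra
    also have "\<dots> = (a \<otimes> s') \<otimes> (t' \<otimes> t) \<oplus> (b \<otimes> t') \<otimes> (s' \<otimes> s)" by (simp only: c(5,6))
    also have "\<dots> = (a \<otimes> t \<oplus> b \<otimes> s) \<otimes> (s' \<otimes> t')" using c(1,3) cc assms(1,3) by algebra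
    finally show "((a' \<otimes> t' \<oplus> b' \<otimes> s', s' \<otimes> t'), (a \<otimes> t \<oplus> b \<otimes> s, s \<otimes> t)) \<in> frac_rel R"
      using c cc assms by (auto simp: frac_rel_def nzd_mult)
  qed
  show ?thesis
    unfolding total_frac_def ring.simps
    by (rule Union_eq_const) (use class_eq assms frac_rel_class_self in blast)+
qed

end

locale frac_hom = A: cring A + B: cring B for A (structure) and B (structure) and h +
  assumes hom: "h \<in> ring_hom A B"
    and maps_nzd: "s \<in> nzd A \<Longrightarrow> h s \<in> nzd B"
begin

lemma frac_map_class:
  assumes a: "a \<in> carrier A" and s: "s \<in> nzd A"
  shows "frac_map B h (frac_rel A `` {(a, s)}) = frac_rel B `` {(h a, h s)}"
proof -
  have class_eq: "frac_rel B `` {(h a', h s')} = frac_rel B `` {(h a, h s)}"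
    if r: "((a, s), (a', s')) \<in> frac_rel A" for a' s'
  proof (rule B.frac_rel_class_eq)
    have c: "a' \<in> carrier A" "s' \<in> nzd A" "a \<otimes>\<^bsub>A\<^esub> s' = a' \<otimes>\<^bsub>A\<^esub> s"
      using r by (auto simp: frac_rel_def)
    moreover have "s \<in> carrier A" "s' \<in> carrier A" using s c A.nzd_closed by blast+
    ultimately have "h a' \<otimes>\<^bsub>B\<^esub> h s = h a \<otimes>\<^bsub>B\<^esub> h s'"
      using a hom by (metis ring_hom_mult)
    then show "((h a', h s'), (h a, h s)) \<in> frac_rel B"
      using c a s hom A.nzd_closed maps_nzd by (auto simp: frac_rel_def ring_hom_closed)
  qed
  show ?thesis
    unfolding frac_map_def
    by (rule Union_eq_const) (use class_eq A.frac_rel_class_self[OF a s] in blast)+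
qed

lemma frac_map_ring_hom: "frac_map B h \<in> ring_hom (total_frac A) (total_frac B)"
proof (rule ring_hom_memI)
  fix X assume "X \<in> carrier (total_frac A)"
  then obtain a s where "a \<in> carrier A" "s \<in> nzd A" "X = frac_rel A `` {(a, s)}"
    by (auto simp: A.carrier_total_frac_iff)
  then have "frac_map B h X = frac_rel B `` {(h a, h s)}" "h a \<in> carrier B" "h s \<in> nzd B"
    using frac_map_class maps_nzd ring_hom_closed[OF hom] by auto
  then show "frac_map B h X \<in> carrier (total_frac B)"
    unfolding B.carrier_total_frac_iff by blast
next
  fix X Y assume "X \<in> carrier (total_frac A)" "Y \<in> carrier (total_frac A)"
  then obtain a s b t where as: "a \<in> carrier A" "s \<in> nzd A" "X = frac_rel A `` {(a, s)}"
    and bt: "b \<in> carrier A" "t \<in> nzd A" "Y = frac_rel A `` {(b, t)}"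
    by (auto simp: A.carrier_total_frac_iff)
  note simps = A.mult_total_frac B.mult_total_frac A.add_total_frac B.add_total_frac
    frac_map_class A.nzd_mult A.nzd_closed maps_nzd ring_hom_closed[OF hom]
    ring_hom_mult[OF hom] ring_hom_add[OF hom]
  show "frac_map B h (X \<otimes>\<^bsub>total_frac A\<^esub> Y) = frac_map B h X \<otimes>\<^bsub>total_frac B\<^esub> frac_map B h Y"
    using as bt by (simp add: simps)
  show "frac_map B h (X \<oplus>\<^bsub>total_frac A\<^esub> Y) = frac_map B h X \<oplus>\<^bsub>total_frac B\<^esub> frac_map B h Y"
    using as bt by (simp add: simps)
next
  show "frac_map B h \<one>\<^bsub>total_frac A\<^esub> = \<one>\<^bsub>total_frac B\<^esub>"
    using hom by (simp add: A.one_total_frac B.one_total_frac frac_map_class A.one_nzd ring_hom_one)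
qed

lemma frac_map_inj:
  assumes inj: "inj_on h (carrier A)"
  shows "inj_on (frac_map B h) (carrier (total_frac A))"
proof (rule inj_onI)
  fix X Y assume "X \<in> carrier (total_frac A)" "Y \<in> carrier (total_frac A)"
    and eq: "frac_map B h X = frac_map B h Y"
  then obtain a s b t where as: "a \<in> carrier A" "s \<in> nzd A" "X = frac_rel A `` {(a, s)}"
    and bt: "b \<in> carrier A" "t \<in> nzd A" "Y = frac_rel A `` {(b, t)}"
    by (auto simp: A.carrier_total_frac_iff)
  have "h (a \<otimes>\<^bsub>A\<^esub> t) = h (b \<otimes>\<^bsub>A\<^esub> s)"
    using eq as bt B.frac_rel_class_eq_iff A.nzd_closed hom maps_nzd
    by (simp add: frac_map_class ring_hom_closed ring_hom_mult)
  then have "a \<otimes>\<^bsub>A\<^esub> t = b \<otimes>\<^bsub>A\<^esub> s"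
    using inj as bt A.nzd_closed by (auto dest: inj_onD)
  then show "X = Y" using as bt A.frac_rel_class_eq_iff by simp
qed

lemma nzd_if_image_nzd:
  assumes inj: "inj_on h (carrier A)" and a: "a \<in> carrier A" and ha: "h a \<in> nzd B"
  shows "a \<in> nzd A"
  unfolding nzd_def
proof safe
  fix x assume x: "x \<in> carrier A" "a \<otimes>\<^bsub>A\<^esub> x = \<zero>\<^bsub>A\<^esub>"
  have h0: "h \<zero>\<^bsub>A\<^esub> = \<zero>\<^bsub>B\<^esub>" using ring_hom_zero[OF hom] A.ring_axioms B.ring_axioms by blast
  have "h a \<otimes>\<^bsub>B\<^esub> h x = \<zero>\<^bsub>B\<^esub>"
    using a x hom h0 by (simp flip: ring_hom_mult)
  then have "h x = h \<zero>\<^bsub>A\<^esub>"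
    using B.nzd_zero_product[OF ha] x hom h0 by (simp add: ring_hom_closed)
  then show "x = \<zero>\<^bsub>A\<^esub>" using inj x by (auto dest: inj_onD)
qed (rule a)

text \<open>If every element of \<open>B\<close> is a fraction of images, then so is every fraction in \<open>B\<close>:
  \<open>b/t = (h a\<^sub>1/h s\<^sub>1) / (h a\<^sub>2/h s\<^sub>2)\<close>, where \<open>a\<^sub>2\<close> is a non-zero-divisor because \<open>h a\<^sub>2\<close> is.\<close>

lemma frac_map_surj:
  assumes inj: "inj_on h (carrier A)"
    and frac: "\<And>b. b \<in> carrier B \<Longrightarrow> \<exists>a\<in>carrier A. \<exists>s\<in>nzd A. b \<otimes>\<^bsub>B\<^esub> h s = h a"
  shows "frac_map B h ` carrier (total_frac A) = carrier (total_frac B)"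
proof
  show "frac_map B h ` carrier (total_frac A) \<subseteq> carrier (total_frac B)"
    using frac_map_ring_hom by (auto simp: ring_hom_def)
next
  show "carrier (total_frac B) \<subseteq> frac_map B h ` carrier (total_frac A)"
  proof
    fix Y assume "Y \<in> carrier (total_frac B)"
    then obtain b t where b: "b \<in> carrier B" and t: "t \<in> nzd B" and Y: "Y = frac_rel B `` {(b, t)}"
      by (auto simp: B.carrier_total_frac_iff)
    obtain a1 s1 where 1: "a1 \<in> carrier A" "s1 \<in> nzd A" "b \<otimes>\<^bsub>B\<^esub> h s1 = h a1"
      using frac b by blast
    obtain a2 s2 where 2: "a2 \<in> carrier A" "s2 \<in> nzd A" "t \<otimes>\<^bsub>B\<^esub> h s2 = h a2"
      using frac t B.nzd_closed by blast
    have cB: "h s1 \<in> carrier B" "h s2 \<in> carrier B" "t \<in> carrier B"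
      using 1 2 t maps_nzd B.nzd_closed by auto
    have "a2 \<in> nzd A"
      using nzd_if_image_nzd[OF inj 2(1)] 2(3) B.nzd_mult[OF t maps_nzd[OF 2(2)]] by simp
    then have n: "s1 \<otimes>\<^bsub>A\<^esub> a2 \<in> nzd A" using A.nzd_mult 1(2) by blast
    have c: "a1 \<otimes>\<^bsub>A\<^esub> s2 \<in> carrier A" using 1 2 A.nzd_closed by simp
    have "h a1 \<otimes>\<^bsub>B\<^esub> h s2 \<otimes>\<^bsub>B\<^esub> t = b \<otimes>\<^bsub>B\<^esub> (h s1 \<otimes>\<^bsub>B\<^esub> (t \<otimes>\<^bsub>B\<^esub> h s2))"
      unfolding 1(3)[symmetric] using b cB by (simp add: B.m_ac)
    then have "h (a1 \<otimes>\<^bsub>A\<^esub> s2) \<otimes>\<^bsub>B\<^esub> t = b \<otimes>\<^bsub>B\<^esub> h (s1 \<otimes>\<^bsub>A\<^esub> a2)"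
      using 1 2 A.nzd_closed hom by (simp add: ring_hom_mult)
    then have "frac_map B h (frac_rel A `` {(a1 \<otimes>\<^bsub>A\<^esub> s2, s1 \<otimes>\<^bsub>A\<^esub> a2)}) = Y"
      using B.frac_rel_class_eq_iff b t c n hom maps_nzd
      by (simp add: Y frac_map_class ring_hom_closed)
    moreover have "frac_rel A `` {(a1 \<otimes>\<^bsub>A\<^esub> s2, s1 \<otimes>\<^bsub>A\<^esub> a2)} \<in> carrier (total_frac A)"
      using c n by (auto simp: A.carrier_total_frac_iff)
    ultimately show "Y \<in> frac_map B h ` carrier (total_frac A)" by blast
  qed
qed

lemma frac_map_ring_iso:
  assumes "inj_on h (carrier A)"
    and "\<And>b. b \<in> carrier B \<Longrightarrow> \<exists>a\<in>carrier A. \<exists>s\<in>nzd A. b \<otimes>\<^bsub>B\<^esub> h s = h a"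
  shows "frac_map B h \<in> ring_iso (total_frac A) (total_frac B)"
  using frac_map_ring_hom frac_map_inj[OF assms(1)] frac_map_surj[OF assms]
  unfolding ring_iso_def bij_betw_def by simp

end

section \<open>Truncated power series\<close>

lemma exists_inverse_mod_monom:
  fixes p :: "'a::field poly"
  assumes p0: "coeff p 0 \<noteq> 0"
  shows "\<exists>v. monom 1 k dvd p * v - 1"
proof (induction k)
  case (Suc k)
  then obtain v r where r: "p * v - 1 = monom 1 k * r" by (auto elim: dvdE)
  define c where "c = coeff r 0 / coeff p 0"
  have "monom c k = monom 1 k * [:c:]" by (simp add: mult_monom flip: monom_0)
  then have "p * (v - monom c k) - 1 = monom 1 k * (r - smult c p)"
    using r by (simp add: algebra_simps)
  moreover have "monom 1 1 dvd r - smult c p"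
    using p0 by (simp add: monom_1_dvd_iff' c_def)
  ultimately have "monom 1 k * monom 1 1 dvd p * (v - monom c k) - 1"
    by (simp add: mult_dvd_mono)
  then show ?case by (auto simp: mult_monom)
qed simp

lemma monom_1_dvd_mult_cancel:
  fixes p q :: "'a::idom poly"
  assumes p0: "coeff p 0 \<noteq> 0" and dvd: "monom 1 k dvd p * q"
  shows "monom 1 k dvd q"
proof (cases "q = 0")
  case False
  have "order 0 p = 0" using p0 order_root[of p 0] by (simp add: poly_0_coeff_0)
  have pq: "p * q \<noteq> 0" using p0 False by auto
  then have "order 0 (p * q) = order 0 q" using \<open>order 0 p = 0\<close> by (simp add: order_mult)
  then show ?thesis using dvd monom_1_dvd_iff[OF pq] monom_1_dvd_iff[OF False] by simp
qed simp

text \<open>A subalgebra of \<open>A[x]/(x\<^sup>k)\<close> containing an element \<open>t = x + O(x\<^sup>2)\<close> is everything: the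
  powers \<open>t\<^sup>j = x\<^sup>j + O(x\<^sup>j\<^sup>+\<^sup>1)\<close> form a triangular basis.\<close>

lemma subalgebra_mod_monom_contains_all:
  fixes S :: "'a::comm_ring_1 poly set"
  assumes const: "\<And>c. [:c:] \<in> S"
    and add: "\<And>p q. p \<in> S \<Longrightarrow> q \<in> S \<Longrightarrow> p + q \<in> S"
    and mult: "\<And>p q. p \<in> S \<Longrightarrow> q \<in> S \<Longrightarrow> p * q \<in> S"
    and cong: "\<And>p q. p \<in> S \<Longrightarrow> monom 1 k dvd p - q \<Longrightarrow> q \<in> S"
    and t: "t \<in> S" "coeff t 0 = 0" "1 < k \<Longrightarrow> coeff t 1 = 1"
  shows "q \<in> S"
proof -
  have power: "t ^ j \<in> S" for j
    by (induction j) (use const[of 1] mult t(1) in \<open>simp_all add: one_pCons\<close>)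
  obtain u where u: "t = monom 1 1 * u"
    using t(2) monom_1_dvd_iff'[of 1 t] by (auto elim: dvdE)
  have low: "coeff (t ^ j) i = 0" if "i < j" for i j
    using that by (simp add: u power_mult_distrib monom_power coeff_monom_mult)
  have diag: "coeff (t ^ j) j = 1" if "j < k" for j
  proof (cases "j = 0")
    case False
    then have "coeff u 0 = 1" using t(3) that by (simp add: u coeff_monom_mult)
    then show ?thesis by (simp add: u power_mult_distrib monom_power coeff_monom_mult coeff_0_power)
  qed simp
  have reach: "\<forall>q. (\<forall>i < k - n. coeff q i = 0) \<longrightarrow> q \<in> S" if "n \<le> k" for n
    using that
  proof (induction n)
    case 0
    show ?case
      using cong[OF const[of 0]] by (simp add: monom_1_dvd_iff')
  next
    case (Suc n)
    define j where "j = k - Suc n"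
    have j: "j < k" "k - n = Suc j" using Suc.prems by (auto simp: j_def)
    show ?case
    proof (intro allI impI)
      fix q :: "'a poly" assume q: "\<forall>i < k - Suc n. coeff q i = 0"
      have "coeff q i = 0" if "i < j" for i using q that by (simp add: j_def)
      then have "\<forall>i < k - n. coeff (q - [:coeff q j:] * t ^ j) i = 0"
        using low diag[OF j(1)] j(2) by (auto simp: less_Suc_eq)
      then have "q - [:coeff q j:] * t ^ j \<in> S" using Suc by simp
      then have "q - [:coeff q j:] * t ^ j + [:coeff q j:] * t ^ j \<in> S"
        using add mult const power by blast
      then show "q \<in> S" by simp
    qed
  qed
  show ?thesis using reach[of k] by simp
qed

section \<open>Derivatives in the angular variable\<close>

definition polar :: "complex \<Rightarrow> complex poly poly \<Rightarrow> complex \<Rightarrow> complex" where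
  "polar \<rho> f = (\<lambda>\<phi>. eval2 f (\<rho> * cos \<phi>) (\<rho> * sin \<phi>))"

lemma eval2_altdef: "eval2 f x1 x2 = poly (poly f [:x2:]) x1"
  unfolding eval2_def by (induction f) (simp_all add: map_poly_pCons)

lemma polar_add: "polar \<rho> (f + g) = (\<lambda>\<phi>. polar \<rho> f \<phi> + polar \<rho> g \<phi>)"
  and polar_mult: "polar \<rho> (f * g) = (\<lambda>\<phi>. polar \<rho> f \<phi> * polar \<rho> g \<phi>)"
  and polar_const: "polar \<rho> [:[:c:]:] = (\<lambda>\<phi>. c)"
  by (simp_all add: polar_def eval2_altdef)

lemma sin_add_pi_half: "sin (x + of_real pi / 2) = cos (x :: complex)"
proof -
  have "of_real pi / 2 = (of_real (pi / 2) :: complex)" by simp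
  then show ?thesis by (simp only: sin_add sin_of_real cos_of_real sin_pi_half cos_pi_half) simp
qed

lemma polar_z1: "polar \<rho> [:[:0, 1:]:] = (\<lambda>\<phi>. \<rho> * sin (\<phi> + of_real pi / 2))"
  and polar_z2: "polar \<rho> [:0, 1:] = (\<lambda>\<phi>. \<rho> * sin (\<phi> + 0))"
  by (simp_all add: polar_def eval2_altdef sin_add_pi_half)

lemma holomorphic_polar: "polar \<rho> f holomorphic_on UNIV"
proof (induction f)
  case (pCons a f)
  have "polar \<rho> (pCons a f) = (\<lambda>\<phi>. poly a (\<rho> * cos \<phi>) + \<rho> * sin \<phi> * polar \<rho> f \<phi>)"
    by (simp add: polar_def eval2_altdef)
  then show ?case using pCons by (auto intro!: holomorphic_intros)
qed (simp add: polar_def eval2_altdef)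

lemma higher_deriv_sin_shift:
  "(deriv ^^ n) (\<lambda>\<phi>. c * sin (\<phi> + a)) =
   (\<lambda>\<phi>::complex. c * sin (\<phi> + a + of_nat n * of_real pi / 2))"
proof (induction n)
  case (Suc n)
  define b where "b = a + of_nat n * of_real pi / 2"
  have "(deriv ^^ Suc n) (\<lambda>\<phi>. c * sin (\<phi> + a)) = deriv (\<lambda>\<phi>. c * sin (\<phi> + b))"
    using Suc by (simp add: b_def add.assoc)
  also have "\<dots> = (\<lambda>\<phi>. c * sin (\<phi> + b + of_real pi / 2))"
  proof
    fix \<phi>
    have "((\<lambda>\<phi>. c * sin (\<phi> + b)) has_field_derivative c * cos (\<phi> + b)) (at \<phi>)"
      by (auto intro!: derivative_eq_intros)
    then show "deriv (\<lambda>\<phi>. c * sin (\<phi> + b)) \<phi> = c * sin (\<phi> + b + of_real pi / 2)"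
      by (simp add: DERIV_imp_deriv sin_add_pi_half)
  qed
  also have "\<dots> = (\<lambda>\<phi>. c * sin (\<phi> + a + of_nat (Suc n) * of_real pi / 2))"
    by (simp add: b_def algebra_simps add_divide_distrib)
  finally show ?case .
qed simp

text \<open>The angular derivatives of \<open>f\<close> at \<open>\<alpha>\<close> depend polynomially on \<open>\<rho>\<close>; this is what makes
  the definite description in \<open>phi_deriv\<close> meaningful.\<close>

definition polynomial_in_radius :: "complex \<Rightarrow> complex poly poly \<Rightarrow> bool" where
  "polynomial_in_radius \<alpha> f \<longleftrightarrow> (\<forall>i. \<exists>p. \<forall>\<rho>. poly p \<rho> = (deriv ^^ i) (polar \<rho> f) \<alpha>)"

lemma polynomial_in_radius_add:
  assumes f: "polynomial_in_radius \<alpha> f" and g: "polynomial_in_radius \<alpha> g"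
  shows "polynomial_in_radius \<alpha> (f + g)"
  unfolding polynomial_in_radius_def
proof
  fix i
  obtain p q where "\<forall>\<rho>. poly p \<rho> = (deriv ^^ i) (polar \<rho> f) \<alpha>"
    "\<forall>\<rho>. poly q \<rho> = (deriv ^^ i) (polar \<rho> g) \<alpha>"
    using f g unfolding polynomial_in_radius_def by blast
  then have "\<forall>\<rho>. poly (p + q) \<rho> = (deriv ^^ i) (polar \<rho> (f + g)) \<alpha>"
    by (simp add: polar_add higher_deriv_add[of _ UNIV] holomorphic_polar)
  then show "\<exists>p. \<forall>\<rho>. poly p \<rho> = (deriv ^^ i) (polar \<rho> (f + g)) \<alpha>" by blast
qed

lemma polynomial_in_radius_mult:
  assumes f: "polynomial_in_radius \<alpha> f" and g: "polynomial_in_radius \<alpha> g"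
  shows "polynomial_in_radius \<alpha> (f * g)"
  unfolding polynomial_in_radius_def
proof
  fix n
  obtain P Q where "\<forall>i \<rho>. poly (P i) \<rho> = (deriv ^^ i) (polar \<rho> f) \<alpha>"
    "\<forall>i \<rho>. poly (Q i) \<rho> = (deriv ^^ i) (polar \<rho> g) \<alpha>"
    using f g unfolding polynomial_in_radius_def by metis
  then have "\<forall>\<rho>. poly (\<Sum>j=0..n. smult (of_nat (n choose j)) (P j * Q (n - j))) \<rho>
      = (deriv ^^ n) (polar \<rho> (f * g)) \<alpha>"
    by (simp add: polar_mult higher_deriv_mult[of _ UNIV] holomorphic_polar poly_sum mult.assoc)
  then show "\<exists>p. \<forall>\<rho>. poly p \<rho> = (deriv ^^ n) (polar \<rho> (f * g)) \<alpha>" by blast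
qed

lemma polynomial_in_radius_sin:
  assumes "\<And>\<rho>. polar \<rho> f = (\<lambda>\<phi>. \<rho> * sin (\<phi> + a))"
  shows "polynomial_in_radius \<alpha> f"
  unfolding polynomial_in_radius_def assms higher_deriv_sin_shift
  by (auto intro!: exI[of _ "[:0, sin (\<alpha> + a + of_nat i * of_real pi / 2):]" for i])

lemma polynomial_in_radius_all: "polynomial_in_radius \<alpha> f"
proof -
  have const: "polynomial_in_radius \<alpha> [:[:c:]:]" for c
    unfolding polynomial_in_radius_def polar_const
    by (auto intro!: exI[of _ "if i = 0 then [:c:] else 0" for i])
  have inner: "polynomial_in_radius \<alpha> [:a:]" for a
  proof (induction a)
    case (pCons c a)
    have "[:pCons c a:] = [:[:c:]:] + [:[:0, 1:]:] * [:a:]" by simp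
    moreover have "polynomial_in_radius \<alpha> ([:[:c:]:] + [:[:0, 1:]:] * [:a:])"
      by (intro polynomial_in_radius_add polynomial_in_radius_mult const pCons.IH
          polynomial_in_radius_sin[OF polar_z1])
    ultimately show ?case by (simp only:)
  qed (use const[of 0] in simp)
  show ?thesis
  proof (induction f)
    case (pCons a f)
    have "pCons a f = [:a:] + [:0, 1:] * f" by simp
    moreover have "polynomial_in_radius \<alpha> ([:a:] + [:0, 1:] * f)"
      by (intro polynomial_in_radius_add polynomial_in_radius_mult inner pCons.IH
          polynomial_in_radius_sin[OF polar_z2])
    ultimately show ?case by (simp only:)
  qed (use const[of 0] in simp)
qed

lemma poly_phi_deriv: "poly (phi_deriv f i \<alpha>) \<rho> = (deriv ^^ i) (polar \<rho> f) \<alpha>"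
proof -
  obtain p where p: "\<forall>\<rho>. poly p \<rho> = (deriv ^^ i) (polar \<rho> f) \<alpha>"
    using polynomial_in_radius_all[of \<alpha> f] unfolding polynomial_in_radius_def by blast
  have "\<exists>!p. \<forall>\<rho>. poly p \<rho> = (deriv ^^ i) (polar \<rho> f) \<alpha>"
  proof (rule ex1I[of _ p])
    fix q assume "\<forall>\<rho>. poly q \<rho> = (deriv ^^ i) (polar \<rho> f) \<alpha>"
    then have "poly q = poly p" using p by auto
    then show "q = p" by (simp add: poly_eq_poly_eq_iff)
  qed (use p in auto)
  from theI'[OF this] show ?thesis unfolding phi_deriv_def polar_def[symmetric] by blast
qed

lemma phi_deriv_eqI: "(\<And>\<rho>. poly p \<rho> = (deriv ^^ i) (polar \<rho> f) \<alpha>) \<Longrightarrow> phi_deriv f i \<alpha> = p"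
  by (metis poly_phi_deriv poly_eq_poly_eq_iff ext)

lemma phi_deriv_add: "phi_deriv (f + g) i \<alpha> = phi_deriv f i \<alpha> + phi_deriv g i \<alpha>"
  by (rule phi_deriv_eqI)
    (simp add: poly_phi_deriv polar_add higher_deriv_add[of _ UNIV] holomorphic_polar)

lemma phi_deriv_mult: "phi_deriv (f * g) n \<alpha> =
  (\<Sum>j=0..n. smult (of_nat (n choose j)) (phi_deriv f j \<alpha> * phi_deriv g (n - j) \<alpha>))"
  by (rule phi_deriv_eqI)
    (simp add: poly_phi_deriv polar_mult higher_deriv_mult[of _ UNIV] holomorphic_polar
      poly_sum mult.assoc)

lemma phi_deriv_mult_0: "phi_deriv (f * g) 0 \<alpha> = phi_deriv f 0 \<alpha> * phi_deriv g 0 \<alpha>"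
  by (simp add: phi_deriv_mult)

lemma phi_deriv_const: "phi_deriv [:[:c:]:] i \<alpha> = (if i = 0 then [:c:] else 0)"
  by (rule phi_deriv_eqI) (simp add: polar_const)

lemma poly_phi_deriv_0: "poly (phi_deriv f 0 \<alpha>) \<rho> = eval2 f (\<rho> * cos \<alpha>) (\<rho> * sin \<alpha>)"
  by (simp add: poly_phi_deriv polar_def)

lemma phi_deriv_sin:
  assumes "\<And>\<rho>. polar \<rho> f = (\<lambda>\<phi>. \<rho> * sin (\<phi> + (a - \<alpha>)))"
  shows "phi_deriv f i \<alpha> = [:0, sin (a + of_nat i * of_real pi / 2):]"
  by (rule phi_deriv_eqI) (simp add: assms higher_deriv_sin_shift)

text \<open>\<open>m\<^sub>\<alpha> = \<rho> cos (\<phi> - \<alpha>)\<close>, the linear form complementary to \<open>l\<^sub>\<alpha> = \<rho> sin (\<phi> - \<alpha>)\<close>.\<close>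

definition m_lin :: "complex \<Rightarrow> complex poly poly" where
  "m_lin \<alpha> = [: [:0, cos \<alpha>:], [:sin \<alpha>:] :]"

lemma phi_deriv_l_lin: "phi_deriv (l_lin \<alpha>) i \<alpha> = [:0, sin (of_nat i * of_real pi / 2):]"
proof -
  have "polar \<rho> (l_lin \<alpha>) = (\<lambda>\<phi>. \<rho> * sin (\<phi> + (0 - \<alpha>)))" for \<rho>
    by (simp add: polar_def eval2_altdef l_lin_def sin_diff algebra_simps)
  from phi_deriv_sin[OF this] show ?thesis by simp
qed

lemma phi_deriv_m_lin:
  "phi_deriv (m_lin \<alpha>) i \<alpha> = [:0, sin (of_real pi / 2 + of_nat i * of_real pi / 2):]"
proof -
  have "sin (\<phi> + (of_real pi / 2 - \<alpha>)) = cos (\<phi> - \<alpha>)" for \<phi>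
    using sin_add_pi_half[of "\<phi> - \<alpha>"] by (simp add: algebra_simps)
  then have "polar \<rho> (m_lin \<alpha>) = (\<lambda>\<phi>. \<rho> * sin (\<phi> + (of_real pi / 2 - \<alpha>)))" for \<rho>
    by (simp add: polar_def eval2_altdef m_lin_def cos_diff algebra_simps)
  then show ?thesis by (rule phi_deriv_sin)
qed

section \<open>The Taylor map and its kernel\<close>

definition taylor_poly :: "complex \<Rightarrow> nat \<Rightarrow> complex poly poly \<Rightarrow> complex poly poly" where
  "taylor_poly \<alpha> k f = (\<Sum>i<k. monom (smult (1 / fact i) (phi_deriv f i \<alpha>)) i)"

lemma Tmap_eq_mod_class: "Tmap \<alpha> k f = mod_class (eps ^ k) (taylor_poly \<alpha> k f)"
  by (simp add: Tmap_def taylor_poly_def r_coset_type_ring)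

lemma coeff_taylor_poly:
  "coeff (taylor_poly \<alpha> k f) i = (if i < k then smult (1 / fact i) (phi_deriv f i \<alpha>) else 0)"
  by (simp add: taylor_poly_def coeff_sum coeff_monom)

lemma eps_power: "eps ^ k = monom 1 k"
  by (simp add: eps_def monom_altdef)

lemma eps_power_dvd_iff: "eps ^ k dvd p \<longleftrightarrow> (\<forall>i<k. coeff p i = 0)"
  by (simp add: eps_power monom_1_dvd_iff')

lemma eps_power_dvd_taylor_poly_iff:
  "eps ^ k dvd taylor_poly \<alpha> k f \<longleftrightarrow> (\<forall>i<k. phi_deriv f i \<alpha> = 0)"
  by (simp add: eps_power_dvd_iff coeff_taylor_poly)

lemma taylor_poly_add: "taylor_poly \<alpha> k (f + g) = taylor_poly \<alpha> k f + taylor_poly \<alpha> k g"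
  by (simp add: taylor_poly_def phi_deriv_add smult_add_right sum.distrib flip: add_monom)

lemma taylor_poly_diff: "taylor_poly \<alpha> k (f - g) = taylor_poly \<alpha> k f - taylor_poly \<alpha> k g"
  using taylor_poly_add[of \<alpha> k "f - g" g] by simp

lemma taylor_poly_const: "k \<ge> 1 \<Longrightarrow> taylor_poly \<alpha> k [:[:c:]:] = [:[:c:]:]"
  by (rule poly_eqI) (simp add: coeff_taylor_poly phi_deriv_const coeff_pCons split: nat.splits)

lemma taylor_poly_one: "k \<ge> 1 \<Longrightarrow> taylor_poly \<alpha> k 1 = 1"
  using taylor_poly_const[of k \<alpha> 1] by (simp add: one_pCons)

lemma coeff_0_taylor_poly: "k \<ge> 1 \<Longrightarrow> coeff (taylor_poly \<alpha> k f) 0 = phi_deriv f 0 \<alpha>"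
  by (simp add: coeff_taylor_poly)

lemma smult_sum_right: "smult c (sum f A) = (\<Sum>x\<in>A. smult c (f x))"
  by (induction A rule: infinite_finite_induct) (simp_all add: smult_add_right)

text \<open>The Leibniz rule for the angular derivatives is the Cauchy product rule for the
  coefficients \<open>f\<^sup>(\<^sup>i\<^sup>)\<^sub>\<alpha>/i!\<close>.\<close>

lemma taylor_poly_mult:
  "mod_class (eps ^ k) (taylor_poly \<alpha> k (f * g))
   = mod_class (eps ^ k) (taylor_poly \<alpha> k f * taylor_poly \<alpha> k g)"
  unfolding mod_class_eq_iff eps_power_dvd_iff
proof (intro allI impI)
  fix i assume i: "i < k"
  have "coeff (taylor_poly \<alpha> k (f * g)) i =
     (\<Sum>j=0..i. smult (1 / fact i * of_nat (i choose j)) (phi_deriv f j \<alpha> * phi_deriv g (i - j) \<alpha>))"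
    using i by (simp add: coeff_taylor_poly phi_deriv_mult smult_sum_right)
  also have "\<dots> = (\<Sum>j\<le>i. coeff (taylor_poly \<alpha> k f) j * coeff (taylor_poly \<alpha> k g) (i - j))"
    unfolding atLeast0AtMost
  proof (rule sum.cong[OF refl])
    fix j assume j: "j \<in> {..i}"
    then have "(1 / fact i * of_nat (i choose j) :: complex) = 1 / fact j * (1 / fact (i - j))"
      by (simp add: binomial_fact field_simps)
    then show "smult (1 / fact i * of_nat (i choose j)) (phi_deriv f j \<alpha> * phi_deriv g (i - j) \<alpha>) =
         coeff (taylor_poly \<alpha> k f) j * coeff (taylor_poly \<alpha> k g) (i - j)"
      using i j by (simp add: coeff_taylor_poly)
  qed
  also have "\<dots> = coeff (taylor_poly \<alpha> k f * taylor_poly \<alpha> k g) i" by (simp add: coeff_mult)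
  finally show "coeff (taylor_poly \<alpha> k (f * g) - taylor_poly \<alpha> k f * taylor_poly \<alpha> k g) i = 0"
    by simp
qed

lemma taylor_poly_power:
  assumes "k \<ge> 1"
  shows "mod_class (eps ^ k) (taylor_poly \<alpha> k (f ^ n)) = mod_class (eps ^ k) (taylor_poly \<alpha> k f ^ n)"
proof (induction n)
  case (Suc n)
  have "mod_class (eps ^ k) (taylor_poly \<alpha> k (f * f ^ n))
      = mod_class (eps ^ k) (taylor_poly \<alpha> k f * taylor_poly \<alpha> k (f ^ n))"
    by (rule taylor_poly_mult)
  also have "\<dots> = mod_class (eps ^ k) (taylor_poly \<alpha> k f * taylor_poly \<alpha> k f ^ n)"
    using Suc by (intro mod_class_mult_cong) simp_all
  finally show ?case by simp
qed (simp add: taylor_poly_one[OF assms])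

lemma poly_poly_const_subst: "poly (poly f q) x = poly (poly f [:poly q x:]) x"
  by (induction f) simp_all

text \<open>A polynomial vanishing on the line \<open>{(\<rho> cos \<alpha>, \<rho> sin \<alpha>)}\<close> is divisible by
  \<open>l\<^sub>\<alpha>\<close>: if \<open>cos \<alpha> \<noteq> 0\<close>, view \<open>f\<close> as a polynomial in \<open>z\<^sub>2\<close> with root \<open>z\<^sub>2 = tan \<alpha> \<cdot> z\<^sub>1\<close>;
  otherwise \<open>l\<^sub>\<alpha>\<close> is a multiple of \<open>z\<^sub>1\<close> and all coefficients of \<open>f\<close> vanish at \<open>z\<^sub>1 = 0\<close>.\<close>

lemma l_lin_dvd_if_vanishing_on_line:
  assumes vanish: "\<And>\<rho>. eval2 f (\<rho> * cos \<alpha>) (\<rho> * sin \<alpha>) = 0"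
  shows "l_lin \<alpha> dvd f"
proof (cases "cos \<alpha> = 0")
  case False
  define q where "q = [:0, sin \<alpha> / cos \<alpha>:]"
  have "poly (poly f q) x = 0" for x
  proof -
    have "poly (poly f q) x = eval2 f (x / cos \<alpha> * cos \<alpha>) (x / cos \<alpha> * sin \<alpha>)"
      using False by (subst poly_poly_const_subst) (simp add: eval2_altdef q_def)
    also have "\<dots> = 0" by (rule vanish)
    finally show ?thesis .
  qed
  then have "[:-q, 1:] dvd f" using poly_all_0_iff_0 poly_eq_0_iff_dvd by blast
  moreover have "[:-q, 1:] = smult [:1 / cos \<alpha>:] (l_lin \<alpha>)"
    using False by (simp add: l_lin_def q_def)
  ultimately show ?thesis by (metis dvd_refl dvd_smult dvd_trans)
next
  case True
  then have sin: "sin \<alpha> \<noteq> 0" using sin_cos_squared_add[of \<alpha>] by auto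
  have "eval2 f 0 x = 0" for x
    using vanish[of "x / sin \<alpha>"] True sin by simp
  then have "map_poly (\<lambda>c. poly c 0) f = 0"
    unfolding eval2_def using poly_all_0_iff_0 by blast
  then have "poly (coeff f j) 0 = 0" for j
    by (metis coeff_0 coeff_map_poly poly_0)
  then have "[:[:0, 1:]:] dvd f"
    by (simp add: const_poly_dvd_iff poly_eq_0_iff_dvd)
  moreover have "[:[:0, 1:]:] = smult [:- 1 / sin \<alpha>:] (l_lin \<alpha>)"
    using True sin by (simp add: l_lin_def)
  ultimately show ?thesis by (metis dvd_refl dvd_smult dvd_trans)
qed

lemma l_lin_dvd_iff: "l_lin \<alpha> dvd f \<longleftrightarrow> phi_deriv f 0 \<alpha> = 0"
proof
  assume "l_lin \<alpha> dvd f"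
  then show "phi_deriv f 0 \<alpha> = 0" by (auto simp: phi_deriv_mult_0 phi_deriv_l_lin)
next
  assume "phi_deriv f 0 \<alpha> = 0"
  then show "l_lin \<alpha> dvd f"
    by (intro l_lin_dvd_if_vanishing_on_line) (metis poly_phi_deriv_0 poly_0)
qed

text \<open>Since \<open>l\<^sub>\<alpha>\<^sup>(\<^sup>0\<^sup>) = 0\<close> and \<open>l\<^sub>\<alpha>\<^sup>(\<^sup>1\<^sup>) = \<rho>\<close>, the Leibniz rule gives
  \<open>(l\<^sub>\<alpha> g)\<^sup>(\<^sup>i\<^sup>+\<^sup>1\<^sup>) = (i+1) \<rho> g\<^sup>(\<^sup>i\<^sup>)\<close> modulo lower derivatives of \<open>g\<close>.\<close>

lemma phi_derivs_vanish_cofactor: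
  assumes vanish: "\<forall>i<Suc k. phi_deriv (l_lin \<alpha> * g) i \<alpha> = 0"
  shows "\<forall>i<k. phi_deriv g i \<alpha> = 0"
proof (intro allI impI)
  fix i assume "i < k"
  then show "phi_deriv g i \<alpha> = 0"
  proof (induction i rule: less_induct)
    case (less i)
    define T where "T j = smult (of_nat (Suc i choose j))
      (phi_deriv (l_lin \<alpha>) j \<alpha> * phi_deriv g (Suc i - j) \<alpha>)" for j
    have rest: "(\<Sum>j\<in>{0..Suc i} - {1}. T j) = 0"
    proof (rule sum.neutral, intro ballI)
      fix j assume j: "j \<in> {0..Suc i} - {1}"
      show "T j = 0"
      proof (cases "j = 0")
        case False
        then have "phi_deriv g (Suc i - j) \<alpha> = 0" using j less by auto
        then show ?thesis by (simp add: T_def)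
      qed (simp add: T_def phi_deriv_l_lin)
    qed
    have "T 1 + (\<Sum>j\<in>{0..Suc i} - {1}. T j) = (\<Sum>j\<in>{0..Suc i}. T j)"
      by (rule sum.remove[symmetric]) auto
    also have "\<dots> = phi_deriv (l_lin \<alpha> * g) (Suc i) \<alpha>"
      unfolding phi_deriv_mult T_def ..
    also have "\<dots> = 0" using vanish less.prems by simp
    finally have "T 1 = 0" by (simp only: rest add_0_right)
    then have "smult (of_nat (Suc i)) ([:0, 1:] * phi_deriv g i \<alpha>) = 0"
      by (simp add: T_def phi_deriv_l_lin)
    then show "phi_deriv g i \<alpha> = 0" by (simp del: of_nat_Suc)
  qed
qed

lemma l_lin_power_dvd_if_phi_derivs_vanish:
  "(\<forall>i<k. phi_deriv f i \<alpha> = 0) \<Longrightarrow> l_lin \<alpha> ^ k dvd f"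
proof (induction k arbitrary: f)
  case (Suc k)
  then obtain g where f: "f = l_lin \<alpha> * g" using l_lin_dvd_iff by (metis dvdE zero_less_Suc)
  then have "l_lin \<alpha> ^ k dvd g" using Suc phi_derivs_vanish_cofactor by blast
  then show ?case unfolding f by simp
qed simp

lemma eps_power_dvd_taylor_poly_iff_l_lin_power_dvd:
  assumes "k \<ge> 1"
  shows "eps ^ k dvd taylor_poly \<alpha> k f \<longleftrightarrow> l_lin \<alpha> ^ k dvd f"
proof
  assume "eps ^ k dvd taylor_poly \<alpha> k f"
  then show "l_lin \<alpha> ^ k dvd f"
    by (simp add: eps_power_dvd_taylor_poly_iff l_lin_power_dvd_if_phi_derivs_vanish)
next
  assume "l_lin \<alpha> ^ k dvd f"
  then obtain g where f: "f = l_lin \<alpha> ^ k * g" by (elim dvdE)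
  have "eps dvd taylor_poly \<alpha> k (l_lin \<alpha>)"
    using eps_power_dvd_iff[of 1] assms by (simp add: coeff_taylor_poly phi_deriv_l_lin)
  then have "eps ^ k dvd taylor_poly \<alpha> k (l_lin \<alpha>) ^ k * taylor_poly \<alpha> k g"
    by (simp add: dvd_power_same)
  moreover have "mod_class (eps ^ k) (taylor_poly \<alpha> k f)
      = mod_class (eps ^ k) (taylor_poly \<alpha> k (l_lin \<alpha>) ^ k * taylor_poly \<alpha> k g)"
    unfolding f using taylor_poly_mult taylor_poly_power[OF assms] mod_class_mult_cong by metis
  ultimately show "eps ^ k dvd taylor_poly \<alpha> k f"
    by (metis mod_class_eq_0_iff)
qed

lemma Tmap_eq_iff: "k \<ge> 1 \<Longrightarrow> Tmap \<alpha> k f = Tmap \<alpha> k g \<longleftrightarrow> l_lin \<alpha> ^ k dvd f - g"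
  by (simp add: Tmap_eq_mod_class mod_class_eq_iff eps_power_dvd_taylor_poly_iff_l_lin_power_dvd
      flip: taylor_poly_diff)

section \<open>Non-zero-divisors\<close>

lemma nzd_Pk: "coeff p 0 \<noteq> 0 \<Longrightarrow> mod_class (eps ^ k) p \<in> nzd (Pk k)"
  unfolding Pk_def nzd_quot_type_ring_iff eps_power using monom_1_dvd_mult_cancel by blast

lemma l_lin_nonzero: "l_lin \<alpha> \<noteq> 0"
  using phi_deriv_l_lin[of \<alpha> 1] by (auto simp: phi_deriv_const[of 0, simplified])

lemma l_lin_power_not_dvd: "\<not> l_lin \<alpha> ^ Suc k dvd l_lin \<alpha> ^ k"
proof
  assume "l_lin \<alpha> ^ Suc k dvd l_lin \<alpha> ^ k"
  then have "l_lin \<alpha> ^ k * l_lin \<alpha> dvd l_lin \<alpha> ^ k * 1" by (simp add: mult.commute)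
  then have "l_lin \<alpha> dvd 1" using l_lin_nonzero by (subst (asm) dvd_mult_cancel_left) auto
  then show False
    using phi_deriv_const[of 1 0 \<alpha>] by (simp add: l_lin_dvd_iff one_pCons)
qed

text \<open>If \<open>g\<close> vanishes on the line \<open>l\<^sub>\<alpha> = 0\<close> then \<open>g l\<^sub>\<alpha>\<^sup>k\<^sup>-\<^sup>1 \<in> (l\<^sub>\<alpha>\<^sup>k)\<close>; otherwise
  \<open>T(g)\<close> has non-zero constant term in \<open>\<epsilon>\<close>, so it cancels modulo \<open>\<epsilon>\<^sup>k\<close>, and the kernel
  of \<open>T\<close> carries this back.\<close>

lemma nzd_Rquot_iff:
  assumes k: "k \<ge> 1"
  shows "mod_class (l_lin \<alpha> ^ k) g \<in> nzd (Rquot \<alpha> k) \<longleftrightarrow> phi_deriv g 0 \<alpha> \<noteq> 0"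
  unfolding Rquot_def nzd_quot_type_ring_iff
proof
  assume nzd: "\<forall>y. l_lin \<alpha> ^ k dvd g * y \<longrightarrow> l_lin \<alpha> ^ k dvd y"
  obtain j where j: "k = Suc j" using k by (cases k) auto
  show "phi_deriv g 0 \<alpha> \<noteq> 0"
  proof
    assume "phi_deriv g 0 \<alpha> = 0"
    then obtain g' where "g = l_lin \<alpha> * g'" using l_lin_dvd_iff by (metis dvdE)
    then have "l_lin \<alpha> ^ k dvd g * l_lin \<alpha> ^ j" by (simp add: j mult_ac)
    then show False using nzd l_lin_power_not_dvd j by blast
  qed
next
  assume g: "phi_deriv g 0 \<alpha> \<noteq> 0"
  show "\<forall>y. l_lin \<alpha> ^ k dvd g * y \<longrightarrow> l_lin \<alpha> ^ k dvd y"
  proof (intro allI impI)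
    fix y assume "l_lin \<alpha> ^ k dvd g * y"
    then have "mod_class (eps ^ k) (taylor_poly \<alpha> k (g * y)) = mod_class (eps ^ k) 0"
      by (simp add: mod_class_eq_0_iff eps_power_dvd_taylor_poly_iff_l_lin_power_dvd[OF k])
    then have "mod_class (eps ^ k) (taylor_poly \<alpha> k g * taylor_poly \<alpha> k y) = mod_class (eps ^ k) 0"
      by (simp add: taylor_poly_mult)
    then have "eps ^ k dvd taylor_poly \<alpha> k y"
      using monom_1_dvd_mult_cancel[of "taylor_poly \<alpha> k g" k "taylor_poly \<alpha> k y"] g
        coeff_0_taylor_poly[OF k]
      by (simp add: mod_class_eq_0_iff eps_power)
    then show "l_lin \<alpha> ^ k dvd y" using eps_power_dvd_taylor_poly_iff_l_lin_power_dvd[OF k] by blast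
  qed
qed

section \<open>Every element of \<open>P\<^sub>k\<close> is a fraction of Taylor expansions\<close>

definition eps_poly :: "complex poly \<Rightarrow> complex poly poly" where
  "eps_poly q = map_poly (\<lambda>c. [:c:]) q"

lemma coeff_eps_poly: "coeff (eps_poly q) i = [:coeff q i:]"
  by (simp add: eps_poly_def coeff_map_poly)

lemma eps_poly_add: "eps_poly (p + q) = eps_poly p + eps_poly q"
  and eps_poly_diff: "eps_poly (p - q) = eps_poly p - eps_poly q"
  and eps_poly_smult: "eps_poly (smult c q) = [:[:c:]:] * eps_poly q"
  and eps_poly_pCons: "eps_poly (pCons a q) = pCons [:a:] (eps_poly q)"
  by (auto intro!: poly_eqI simp: coeff_eps_poly coeff_pCons split: nat.splits)

lemma eps_poly_mult: "eps_poly (p * q) = eps_poly p * eps_poly q"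
proof (induction p)
  case (pCons a p)
  have "eps_poly (pCons a p * q) = eps_poly (smult a q) + eps_poly (pCons 0 (p * q))"
    by (simp add: eps_poly_add)
  also have "\<dots> = [:[:a:]:] * eps_poly q + pCons 0 (eps_poly p * eps_poly q)"
    using pCons.IH by (simp add: eps_poly_smult eps_poly_pCons)
  also have "\<dots> = eps_poly (pCons a p) * eps_poly q"
    by (simp add: eps_poly_pCons)
  finally show ?case .
qed (simp add: eps_poly_def)

lemma eps_poly_const: "eps_poly [:c:] = [:[:c:]:]"
  by (simp add: eps_poly_pCons) (simp add: eps_poly_def)

lemma eps_poly_x: "eps_poly [:0, 1:] = eps"
  by (simp add: eps_poly_pCons eps_def) (simp add: eps_poly_def)

lemma eps_poly_one: "eps_poly 1 = 1"
  using eps_poly_const[of 1] by (simp add: one_pCons)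

lemma eps_power_dvd_eps_poly: "monom 1 k dvd q \<Longrightarrow> eps ^ k dvd eps_poly q"
  by (simp add: eps_power_dvd_iff monom_1_dvd_iff' coeff_eps_poly)

text \<open>The Taylor polynomial of \<open>sin\<close> at \<open>a\<close>: \<open>l\<^sub>\<alpha>\<close> and \<open>m\<^sub>\<alpha>\<close> are mapped to \<open>\<rho>\<close> times the
  Taylor polynomials of \<open>sin \<epsilon>\<close> and \<open>cos \<epsilon> = sin (\<epsilon> + \<pi>/2)\<close>.\<close>

definition sin_taylor :: "complex \<Rightarrow> nat \<Rightarrow> complex poly" where
  "sin_taylor a k = (\<Sum>i<k. monom (sin (a + of_nat i * of_real pi / 2) / fact i) i)"

lemma coeff_sin_taylor:
  "coeff (sin_taylor a k) i = (if i < k then sin (a + of_nat i * of_real pi / 2) / fact i else 0)"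
  by (simp add: sin_taylor_def coeff_sum coeff_monom)

lemma taylor_poly_l_lin: "taylor_poly \<alpha> k (l_lin \<alpha>) = [:[:0, 1:]:] * eps_poly (sin_taylor 0 k)"
  by (rule poly_eqI) (simp add: coeff_taylor_poly phi_deriv_l_lin coeff_eps_poly coeff_sin_taylor)

lemma taylor_poly_m_lin:
  "taylor_poly \<alpha> k (m_lin \<alpha>) = [:[:0, 1:]:] * eps_poly (sin_taylor (of_real pi / 2) k)"
  by (rule poly_eqI) (simp add: coeff_taylor_poly phi_deriv_m_lin coeff_eps_poly coeff_sin_taylor)

lemma eps_poly_cos_taylor_inverse:
  assumes "k \<ge> 1"
  obtains v where "coeff v 0 = 1"
    "mod_class (eps ^ k) (eps_poly (sin_taylor (of_real pi / 2) k) * eps_poly v) = mod_class (eps ^ k) 1"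
proof -
  let ?C = "sin_taylor (of_real pi / 2) k"
  have C0: "coeff ?C 0 = 1"
    using assms by (simp add: coeff_sin_taylor sin_add_pi_half[of 0, simplified])
  obtain v where v: "monom 1 k dvd ?C * v - 1" using exists_inverse_mod_monom[of ?C k] C0 by auto
  then have "coeff (?C * v - 1) 0 = 0"
    using assms by (simp add: monom_1_dvd_iff')
  then have "coeff v 0 = 1" using C0 by (simp add: coeff_mult_0)
  moreover have "eps ^ k dvd eps_poly (?C * v - 1)" using v by (rule eps_power_dvd_eps_poly)
  then have "mod_class (eps ^ k) (eps_poly ?C * eps_poly v) = mod_class (eps ^ k) 1"
    by (simp add: mod_class_eq_iff eps_poly_diff eps_poly_mult eps_poly_one)
  ultimately show ?thesis using that by blast
qed

definition taylor_fractions :: "complex \<Rightarrow> nat \<Rightarrow> complex poly poly set" where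
  "taylor_fractions \<alpha> k = {p. \<exists>f g. phi_deriv g 0 \<alpha> \<noteq> 0 \<and>
     mod_class (eps ^ k) (p * taylor_poly \<alpha> k g) = mod_class (eps ^ k) (taylor_poly \<alpha> k f)}"

lemma taylor_poly_in_taylor_fractions:
  assumes "k \<ge> 1"
  shows "taylor_poly \<alpha> k f \<in> taylor_fractions \<alpha> k"
proof -
  have "phi_deriv 1 0 \<alpha> \<noteq> 0" using phi_deriv_const[of 1 0 \<alpha>] by (simp add: one_pCons)
  then show ?thesis
    unfolding taylor_fractions_def using taylor_poly_one[OF assms] by force
qed

lemma const_in_taylor_fractions: "k \<ge> 1 \<Longrightarrow> [:[:c:]:] \<in> taylor_fractions \<alpha> k"
  using taylor_poly_in_taylor_fractions[of k \<alpha> "[:[:c:]:]"] by (simp add: taylor_poly_const)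

lemma taylor_fractions_cong:
  assumes p: "p \<in> taylor_fractions \<alpha> k" and pq: "mod_class (eps ^ k) p = mod_class (eps ^ k) q"
  shows "q \<in> taylor_fractions \<alpha> k"
proof -
  obtain f g where "phi_deriv g 0 \<alpha> \<noteq> 0"
    "mod_class (eps ^ k) (p * taylor_poly \<alpha> k g) = mod_class (eps ^ k) (taylor_poly \<alpha> k f)"
    using p unfolding taylor_fractions_def by blast
  moreover have "mod_class (eps ^ k) (q * taylor_poly \<alpha> k g) = mod_class (eps ^ k) (p * taylor_poly \<alpha> k g)"
    using pq by (intro mod_class_mult_cong) simp_all
  ultimately show ?thesis unfolding taylor_fractions_def by auto
qed

context
  fixes \<alpha> :: complex and k :: nat
begin

private abbreviation T where "T \<equiv> taylor_poly \<alpha> k"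
private abbreviation c where "c \<equiv> mod_class (eps ^ k)"

lemma taylor_fractions_add:
  assumes "p \<in> taylor_fractions \<alpha> k" "q \<in> taylor_fractions \<alpha> k"
  shows "p + q \<in> taylor_fractions \<alpha> k"
proof -
  obtain f1 g1 f2 g2 where g: "phi_deriv g1 0 \<alpha> \<noteq> 0" "phi_deriv g2 0 \<alpha> \<noteq> 0"
    and pq: "c (p * T g1) = c (T f1)" "c (q * T g2) = c (T f2)"
    using assms unfolding taylor_fractions_def by blast
  have "c ((p + q) * T (g1 * g2)) = c ((p + q) * (T g1 * T g2))"
    by (intro mod_class_mult_cong refl taylor_poly_mult)
  also have "(p + q) * (T g1 * T g2) = p * T g1 * T g2 + q * T g2 * T g1"
    by (simp add: algebra_simps)
  also have "c \<dots> = c (T f1 * T g2 + T f2 * T g1)"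
    using pq by (intro mod_class_add_cong mod_class_mult_cong refl)
  also have "\<dots> = c (T (f1 * g2 + f2 * g1))"
    unfolding taylor_poly_add by (intro mod_class_add_cong taylor_poly_mult[symmetric])
  moreover have "phi_deriv (g1 * g2) 0 \<alpha> \<noteq> 0" using g by (simp add: phi_deriv_mult_0)
  ultimately show ?thesis unfolding taylor_fractions_def by blast
qed

lemma taylor_fractions_mult:
  assumes "p \<in> taylor_fractions \<alpha> k" "q \<in> taylor_fractions \<alpha> k"
  shows "p * q \<in> taylor_fractions \<alpha> k"
proof -
  obtain f1 g1 f2 g2 where g: "phi_deriv g1 0 \<alpha> \<noteq> 0" "phi_deriv g2 0 \<alpha> \<noteq> 0"
    and pq: "c (p * T g1) = c (T f1)" "c (q * T g2) = c (T f2)"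
    using assms unfolding taylor_fractions_def by blast
  have "c (p * q * T (g1 * g2)) = c (p * q * (T g1 * T g2))"
    by (intro mod_class_mult_cong refl taylor_poly_mult)
  also have "p * q * (T g1 * T g2) = p * T g1 * (q * T g2)"
    by (simp add: algebra_simps)
  also have "c \<dots> = c (T f1 * T f2)"
    using pq by (intro mod_class_mult_cong)
  also have "\<dots> = c (T (f1 * f2))"
    by (rule taylor_poly_mult[symmetric])
  moreover have "phi_deriv (g1 * g2) 0 \<alpha> \<noteq> 0" using g by (simp add: phi_deriv_mult_0)
  ultimately show ?thesis unfolding taylor_fractions_def by blast
qed

lemma taylor_fractions_cancel:
  assumes p: "p * T s \<in> taylor_fractions \<alpha> k" and s: "phi_deriv s 0 \<alpha> \<noteq> 0"
  shows "p \<in> taylor_fractions \<alpha> k"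
proof -
  obtain f g where g: "phi_deriv g 0 \<alpha> \<noteq> 0" and eq: "c (p * T s * T g) = c (T f)"
    using p unfolding taylor_fractions_def by blast
  have "c (p * T (s * g)) = c (p * (T s * T g))"
    by (intro mod_class_mult_cong refl taylor_poly_mult)
  also have "\<dots> = c (T f)" using eq by (simp add: mult.assoc)
  moreover have "phi_deriv (s * g) 0 \<alpha> \<noteq> 0" using g s by (simp add: phi_deriv_mult_0)
  ultimately show ?thesis unfolding taylor_fractions_def by blast
qed

end

lemma tan_taylor_in_taylor_fractions:
  assumes k: "k \<ge> 1"
  obtains t where "eps_poly t \<in> taylor_fractions \<alpha> k" "coeff t 0 = 0" "1 < k \<Longrightarrow> coeff t 1 = 1"
proof -
  let ?S = "sin_taylor 0 k" and ?C = "sin_taylor (of_real pi / 2) k"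
  obtain v where v0: "coeff v 0 = 1"
    and v1: "mod_class (eps ^ k) (eps_poly ?C * eps_poly v) = mod_class (eps ^ k) 1"
    using eps_poly_cos_taylor_inverse[OF k] .
  have "mod_class (eps ^ k) (eps_poly (?S * v) * taylor_poly \<alpha> k (m_lin \<alpha>))
      = mod_class (eps ^ k) ([:[:0, 1:]:] * eps_poly ?S * (eps_poly ?C * eps_poly v))"
    by (simp add: taylor_poly_m_lin eps_poly_mult algebra_simps)
  also have "\<dots> = mod_class (eps ^ k) ([:[:0, 1:]:] * eps_poly ?S * 1)"
    by (intro mod_class_mult_cong refl v1)
  also have "\<dots> = mod_class (eps ^ k) (taylor_poly \<alpha> k (l_lin \<alpha>))"
    by (simp add: taylor_poly_l_lin)
  finally have "eps_poly (?S * v) * taylor_poly \<alpha> k (m_lin \<alpha>) \<in> taylor_fractions \<alpha> k"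
    by (rule taylor_fractions_cong[OF taylor_poly_in_taylor_fractions[OF k], OF sym])
  then have "eps_poly (?S * v) \<in> taylor_fractions \<alpha> k"
    by (rule taylor_fractions_cancel) (simp add: phi_deriv_m_lin sin_add_pi_half[of 0, simplified])
  moreover have "coeff (?S * v) 0 = 0" by (simp add: coeff_mult_0 coeff_sin_taylor)
  moreover have "coeff (?S * v) 1 = 1" if "1 < k"
    using that v0 by (simp add: coeff_mult coeff_sin_taylor sin_add_pi_half[of 0, simplified])
  ultimately show ?thesis using that by blast
qed

lemma eps_poly_in_taylor_fractions:
  assumes k: "k \<ge> 1"
  shows "eps_poly q \<in> taylor_fractions \<alpha> k"
proof -
  let ?F = "taylor_fractions \<alpha> k"
  obtain t where t: "eps_poly t \<in> ?F" "coeff t 0 = 0" "1 < k \<Longrightarrow> coeff t 1 = 1"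
    using tan_taylor_in_taylor_fractions[OF k, where \<alpha> = \<alpha>] by blast
  have "q \<in> {q. eps_poly q \<in> ?F}"
  proof (rule subalgebra_mod_monom_contains_all)
    show "[:c:] \<in> {q. eps_poly q \<in> ?F}" for c
      using const_in_taylor_fractions[OF k] by (simp add: eps_poly_const)
    show "p + q \<in> {q. eps_poly q \<in> ?F}" if "p \<in> {q. eps_poly q \<in> ?F}" "q \<in> {q. eps_poly q \<in> ?F}"
      for p q using that taylor_fractions_add by (simp add: eps_poly_add)
    show "p * q \<in> {q. eps_poly q \<in> ?F}" if "p \<in> {q. eps_poly q \<in> ?F}" "q \<in> {q. eps_poly q \<in> ?F}"
      for p q using that taylor_fractions_mult by (simp add: eps_poly_mult)
    show "q \<in> {q. eps_poly q \<in> ?F}" if "p \<in> {q. eps_poly q \<in> ?F}" "monom 1 k dvd p - q" for p q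
    proof -
      have "eps ^ k dvd eps_poly p - eps_poly q"
        using eps_power_dvd_eps_poly[OF that(2)] by (simp add: eps_poly_diff)
      then show ?thesis
        using taylor_fractions_cong that(1) by (simp add: mod_class_eq_iff)
    qed
  qed (use t in simp_all)
  then show ?thesis by simp
qed

lemma taylor_fractions_UNIV:
  assumes k: "k \<ge> 1"
  shows "p \<in> taylor_fractions \<alpha> k"
proof -
  let ?F = "taylor_fractions \<alpha> k" and ?C = "sin_taylor (of_real pi / 2) k"
  obtain v where "mod_class (eps ^ k) (eps_poly ?C * eps_poly v) = mod_class (eps ^ k) 1"
    using eps_poly_cos_taylor_inverse[OF k] .
  then have "mod_class (eps ^ k) ([:[:0, 1:]:] * (eps_poly ?C * eps_poly v))
      = mod_class (eps ^ k) ([:[:0, 1:]:] * 1)"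
    by (intro mod_class_mult_cong refl)
  then have "mod_class (eps ^ k) (taylor_poly \<alpha> k (m_lin \<alpha>) * eps_poly v) = mod_class (eps ^ k) [:[:0, 1:]:]"
    by (simp add: taylor_poly_m_lin mult.assoc)
  moreover have "taylor_poly \<alpha> k (m_lin \<alpha>) * eps_poly v \<in> ?F"
    by (intro taylor_fractions_mult taylor_poly_in_taylor_fractions eps_poly_in_taylor_fractions k)
  ultimately have rho: "[:[:0, 1:]:] \<in> ?F"
    using taylor_fractions_cong by blast
  have inner: "[:a:] \<in> ?F" for a
  proof (induction a)
    case (pCons c a)
    have "[:[:c:]:] + [:[:0, 1:]:] * [:a:] \<in> ?F"
      by (intro taylor_fractions_add taylor_fractions_mult const_in_taylor_fractions k rho pCons.IH)
    then show ?case by simp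
  qed (use const_in_taylor_fractions[OF k, of 0] in simp)
  show ?thesis
  proof (induction p)
    case (pCons a p)
    have "[:a:] + eps * p \<in> ?F"
      by (intro taylor_fractions_add taylor_fractions_mult inner pCons.IH)
        (metis eps_poly_in_taylor_fractions k eps_poly_x)
    then show ?case by (simp add: eps_def)
  qed (use const_in_taylor_fractions[OF k, of 0] in simp)
qed

lemma Tmap_ring_hom:
  assumes "k \<ge> 1"
  shows "Tmap \<alpha> k \<in> ring_hom type_ring (Pk k)"
proof (rule ring_hom_memI)
  fix x y :: "complex poly poly"
  show "Tmap \<alpha> k x \<in> carrier (Pk k)"
    by (simp add: Tmap_eq_mod_class Pk_def carrier_quot_type_ring)
  show "Tmap \<alpha> k (x \<otimes>\<^bsub>type_ring\<^esub> y) = Tmap \<alpha> k x \<otimes>\<^bsub>Pk k\<^esub> Tmap \<alpha> k y"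
    by (simp add: Tmap_eq_mod_class Pk_def mult_quot_type_ring taylor_poly_mult)
  show "Tmap \<alpha> k (x \<oplus>\<^bsub>type_ring\<^esub> y) = Tmap \<alpha> k x \<oplus>\<^bsub>Pk k\<^esub> Tmap \<alpha> k y"
    by (simp add: Tmap_eq_mod_class Pk_def add_quot_type_ring taylor_poly_add)
  show "Tmap \<alpha> k \<one>\<^bsub>type_ring\<^esub> = \<one>\<^bsub>Pk k\<^esub>"
    using assms by (simp add: Tmap_eq_mod_class Pk_def one_quot_type_ring taylor_poly_one)
qed

lemma Tmap_const: "k \<ge> 1 \<Longrightarrow> Tmap \<alpha> k [:[:c:]:] = PIdl\<^bsub>type_ring\<^esub> (eps ^ k) +>\<^bsub>type_ring\<^esub> [:[:c:]:]"
  by (simp add: Tmap_eq_mod_class r_coset_type_ring taylor_poly_const)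

lemma a_kernel_Tmap:
  assumes "k \<ge> 1"
  shows "a_kernel type_ring (Pk k) (Tmap \<alpha> k) = PIdl\<^bsub>type_ring\<^esub> (l_lin \<alpha> ^ k)"
proof -
  have "\<zero>\<^bsub>Pk k\<^esub> = Tmap \<alpha> k 0"
    using Tmap_const[OF assms, of \<alpha> 0] by (simp add: Pk_def zero_quot_type_ring r_coset_type_ring)
  then show ?thesis
    using Tmap_eq_iff[OF assms, of \<alpha> _ 0] by (auto simp: a_kernel_def' cgenideal_type_ring)
qed

lemma quot_induced_Tmap:
  "k \<ge> 1 \<Longrightarrow> quot_induced (Tmap \<alpha> k) (mod_class (l_lin \<alpha> ^ k) f) = Tmap \<alpha> k f"
  by (rule quot_induced_mod_class) (simp add: Tmap_eq_iff)

lemma quot_induced_Tmap_ring_hom: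
  "k \<ge> 1 \<Longrightarrow> quot_induced (Tmap \<alpha> k) \<in> ring_hom (Rquot \<alpha> k) (Pk k)"
  unfolding Rquot_def by (rule quot_induced_ring_hom) (simp_all add: Tmap_ring_hom Tmap_eq_iff)

lemma inj_on_quot_induced_Tmap:
  "k \<ge> 1 \<Longrightarrow> inj_on (quot_induced (Tmap \<alpha> k)) (carrier (Rquot \<alpha> k))"
  unfolding Rquot_def by (rule inj_on_quot_induced) (simp add: Tmap_eq_iff)

lemma quot_induced_Tmap_nzd:
  assumes k: "k \<ge> 1" and s: "s \<in> nzd (Rquot \<alpha> k)"
  shows "quot_induced (Tmap \<alpha> k) s \<in> nzd (Pk k)"
proof -
  obtain g where g: "s = mod_class (l_lin \<alpha> ^ k) g"
    using s by (auto simp: nzd_def Rquot_def carrier_quot_type_ring)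
  then have "coeff (taylor_poly \<alpha> k g) 0 \<noteq> 0"
    using s nzd_Rquot_iff[OF k] coeff_0_taylor_poly[OF k] by simp
  then show ?thesis by (simp add: g quot_induced_Tmap[OF k] Tmap_eq_mod_class nzd_Pk)
qed

lemma quot_induced_Tmap_fractions:
  assumes k: "k \<ge> 1" and b: "b \<in> carrier (Pk k)"
  shows "\<exists>a\<in>carrier (Rquot \<alpha> k). \<exists>s\<in>nzd (Rquot \<alpha> k).
    b \<otimes>\<^bsub>Pk k\<^esub> quot_induced (Tmap \<alpha> k) s = quot_induced (Tmap \<alpha> k) a"
proof -
  obtain p where p: "b = mod_class (eps ^ k) p" using b by (auto simp: Pk_def carrier_quot_type_ring)
  obtain f g where g: "phi_deriv g 0 \<alpha> \<noteq> 0"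
    and eq: "mod_class (eps ^ k) (p * taylor_poly \<alpha> k g) = mod_class (eps ^ k) (taylor_poly \<alpha> k f)"
    using taylor_fractions_UNIV[OF k, of p \<alpha>] unfolding taylor_fractions_def by blast
  have "mod_class (l_lin \<alpha> ^ k) f \<in> carrier (Rquot \<alpha> k)"
    by (simp add: Rquot_def carrier_quot_type_ring)
  moreover have "mod_class (l_lin \<alpha> ^ k) g \<in> nzd (Rquot \<alpha> k)"
    using nzd_Rquot_iff[OF k] g by simp
  moreover have "b \<otimes>\<^bsub>Pk k\<^esub> quot_induced (Tmap \<alpha> k) (mod_class (l_lin \<alpha> ^ k) g)
      = quot_induced (Tmap \<alpha> k) (mod_class (l_lin \<alpha> ^ k) f)"
    using eq by (simp add: p quot_induced_Tmap[OF k] Tmap_eq_mod_class Pk_def mult_quot_type_ring)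
  ultimately show ?thesis by blast
qed

theorem lemma2p11:
  fixes \<alpha> :: complex and k :: nat
  assumes "k \<ge> 1"
  shows "Tmap \<alpha> k \<in> ring_hom type_ring (Pk k)
     \<and> (\<forall>c f. Tmap \<alpha> k ([:[:c:]:] * f) = (Tmap \<alpha> k [:[:c:]:]) \<otimes>\<^bsub>Pk k\<^esub> (Tmap \<alpha> k f)
              \<and> Tmap \<alpha> k [:[:c:]:] = (PIdl\<^bsub>type_ring\<^esub> (eps ^ k)) +>\<^bsub>type_ring\<^esub> [:[:c:]:])
     \<and> a_kernel type_ring (Pk k) (Tmap \<alpha> k) = PIdl\<^bsub>type_ring\<^esub> (l_lin \<alpha> ^ k)
     \<and> quot_induced (Tmap \<alpha> k) \<in> ring_hom (Rquot \<alpha> k) (Pk k)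
     \<and> inj_on (quot_induced (Tmap \<alpha> k)) (carrier (Rquot \<alpha> k))
     \<and> (\<forall>s \<in> nzd (Rquot \<alpha> k). quot_induced (Tmap \<alpha> k) s \<in> nzd (Pk k))
     \<and> frac_map (Pk k) (quot_induced (Tmap \<alpha> k))
         \<in> ring_iso (total_frac (Rquot \<alpha> k)) (total_frac (Pk k))"
proof -
  note hom = Tmap_ring_hom[OF assms]
  interpret \<tau>: frac_hom "Rquot \<alpha> k" "Pk k" "quot_induced (Tmap \<alpha> k)"
    by (intro frac_hom.intro frac_hom_axioms.intro quot_induced_Tmap_ring_hom[OF assms]
        quot_induced_Tmap_nzd[OF assms]) (simp_all add: Rquot_def Pk_def cring_quot_type_ring)
  have "Tmap \<alpha> k (f * g) = Tmap \<alpha> k f \<otimes>\<^bsub>Pk k\<^esub> Tmap \<alpha> k g" for f g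
    using ring_hom_mult[OF hom] by simp
  then show ?thesis
    using hom Tmap_const[OF assms] a_kernel_Tmap[OF assms]
      quot_induced_Tmap_ring_hom[OF assms] inj_on_quot_induced_Tmap[OF assms]
      quot_induced_Tmap_nzd[OF assms]
      \<tau>.frac_map_ring_iso[OF inj_on_quot_induced_Tmap[OF assms] quot_induced_Tmap_fractions[OF assms]]
    by blast
qed

end
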